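(* Let $\mathcal{M}$ be the $2\times2$ gridding matrix with $\mathcal{M}_{1,1}=\mathrm{Av}(\pi)$, $\mathcal{M}_{2,1}=\mathrm{Dec}$, $\mathcal{M}_{1,2}=\mathrm{Dec}$, $\mathcal{M}_{2,2}=\mathrm{Inc}$ (i.e. bottom row $\mathrm{Av}(\pi),\mathrm{Dec}$ and top row $\mathrm{Dec},\mathrm{Inc}$). Then $\mathrm{Grid}(\mathcal{M})\subseteq\mathrm{Av}(\sigma)$ whenever $\pi=132$ and $\sigma=14523$, or $\pi=231$ and $\sigma=24513$, or $\pi=321$ and $\sigma\in\{32154,42513\}$.
   Context: $\mathrm{Av}(\pi)$ is the class of permutations avoiding $\pi$; $\mathrm{Inc}=\mathrm{Av}(21)$, $\mathrm{Dec}=\mathrm{Av}(12)$. For a matrix $\mathcal{M}$ of permutation classes with $k$ columns and $\ell$ rows ($\mathcal{M}_{i,j}$ in column $i$, row $j$, rows numbered bottom to top), $\mathrm{Grid}(\mathcal{M})$ is the set of permutations $\tau$ of length $n$ for which there are $1=c_1\le\dots\le c_{k+1}=n+1$, $1=r_1\le\dots\le r_{\ell+1}=n+1$ such that for each $i,j$ the points $(x,\tau_x)$ with $c_i\le x<c_{i+1}$, $r_j\le\tau_x<r_{j+1}$ form a pattern belonging to $\mathcal{M}_{i,j}$. *)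

theory Defs
  imports Main
begin

text \<open>Permutations of length n are lists of the values 1..n, each once
  (the entry at 1-based position x is tau ! (x - 1)).\<close>
definition is_perm :: "nat \<Rightarrow> nat list \<Rightarrow> bool" where
  "is_perm n tau \<longleftrightarrow> length tau = n \<and> distinct tau \<and> set tau = {1..n}"

definition contains :: "nat list \<Rightarrow> nat list \<Rightarrow> bool" where
  "contains xs p \<longleftrightarrow> (\<exists>f. (\<forall>a b. a < b \<longrightarrow> b < length p \<longrightarrow> f a < f b)
      \<and> (\<forall>a < length p. f a < length xs)
      \<and> (\<forall>a < length p. \<forall>b < length p. (xs ! f a < xs ! f b \<longleftrightarrow> p ! a < p ! b)))"

definition Av :: "nat list \<Rightarrow> nat list set" where
  "Av p = {xs. \<not> contains xs p}"

definition Inc :: "nat list set" where "Inc = Av [2,1]"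
definition Dec :: "nat list set" where "Dec = Av [1,2]"

text \<open>Grid class of a matrix M of classes with k columns and l rows
  (M i j = cell in column i, row j, rows numbered bottom to top).\<close>
definition Grid :: "nat \<Rightarrow> nat \<Rightarrow> (nat \<Rightarrow> nat \<Rightarrow> nat list set) \<Rightarrow> nat list set" where
  "Grid k l M = {tau. \<exists>n. is_perm n tau \<and>
     (\<exists>c r :: nat \<Rightarrow> nat.
        c 1 = 1 \<and> c (k + 1) = n + 1 \<and> (\<forall>i\<in>{1..k}. c i \<le> c (i + 1)) \<and>
        r 1 = 1 \<and> r (l + 1) = n + 1 \<and> (\<forall>j\<in>{1..l}. r j \<le> r (j + 1)) \<and>
        (\<forall>i\<in>{1..k}. \<forall>j\<in>{1..l}.
           map (\<lambda>x. tau ! (x - 1))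
             (filter (\<lambda>x. c i \<le> x \<and> x < c (i + 1) \<and> r j \<le> tau ! (x - 1) \<and> tau ! (x - 1) < r (j + 1))
                [1..<n + 1]) \<in> M i j))}"

end

(* An occurrence of sigma in a gridded permutation tau labels each entry of sigma with the cell
   of tau that contains its image (the last column separator not exceeding its position, the
   last row separator not exceeding its value). These labels weakly increase with the position
   (columns) and with the value (rows) of the entry.
   Entries of sigma sharing a cell (i, j) occur inside the corresponding cell of tau, so they
   avoid the basis pattern of that cell. Hence Grid(M) is contained in Av(sigma) as soon as every
   monotone labelling of sigma puts a basis pattern into one of its cells; for a fixed sigma
   this is a finite check, carried out by evaluation for the four pairs (pi, sigma). *)

theory Submission
  imports Defs
begin

definition occurrence :: "(nat \<Rightarrow> nat) \<Rightarrow> nat list \<Rightarrow> nat list \<Rightarrow> bool" where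
  "occurrence f xs p \<longleftrightarrow> (\<forall>a b. a < b \<longrightarrow> b < length p \<longrightarrow> f a < f b)
      \<and> (\<forall>a < length p. f a < length xs)
      \<and> (\<forall>a < length p. \<forall>b < length p. xs ! f a < xs ! f b \<longleftrightarrow> p ! a < p ! b)"

lemma contains_iff_occurrence: "contains xs p \<longleftrightarrow> (\<exists>f. occurrence f xs p)"
  unfolding contains_def occurrence_def ..

definition order_isomorphic :: "nat list \<Rightarrow> nat list \<Rightarrow> bool" where
  "order_isomorphic xs ys \<longleftrightarrow> length xs = length ys \<and>
     (\<forall>a\<in>set [0..<length xs]. \<forall>b\<in>set [0..<length xs]. xs ! a < xs ! b \<longleftrightarrow> ys ! a < ys ! b)"

lemma occurrence_compose:
  assumes f: "occurrence f xs s"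
    and sorted: "sorted_wrt (<) is" and range: "set is \<subseteq> {..<length s}"
    and iso: "order_isomorphic (map ((!) s) is) p"
  shows "occurrence (\<lambda>a. f (is ! a)) xs p"
proof -
  have len: "length is = length p" using iso by (simp add: order_isomorphic_def)
  have is_less: "is ! a < length s" if "a < length p" for a
  proof -
    have "is ! a \<in> set is" using that len by simp
    with range show ?thesis by auto
  qed
  show ?thesis
    unfolding occurrence_def
  proof (intro conjI allI impI)
    fix a b assume "a < b" "b < length p"
    then have "is ! a < is ! b"
      using sorted len by (simp add: sorted_wrt_iff_nth_less)
    then show "f (is ! a) < f (is ! b)"
      using f is_less \<open>b < length p\<close> unfolding occurrence_def by blast
  next
    fix a assume "a < length p"
    then show "f (is ! a) < length xs"
      using f is_less unfolding occurrence_def by blast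
  next
    fix a b assume ab: "a < length p" "b < length p"
    then have "xs ! f (is ! a) < xs ! f (is ! b) \<longleftrightarrow> s ! (is ! a) < s ! (is ! b)"
      using f is_less unfolding occurrence_def by blast
    also have "\<dots> \<longleftrightarrow> p ! a < p ! b"
      using iso ab len unfolding order_isomorphic_def by auto
    finally show "xs ! f (is ! a) < xs ! f (is ! b) \<longleftrightarrow> p ! a < p ! b" .
  qed
qed

lemma filter_upt_rank:
  assumes "m \<le> q" "q < N" "P q"
  shows "length (filter P [m..<q]) < length (filter P [m..<N])"
    and "filter P [m..<N] ! length (filter P [m..<q]) = q"
proof -
  have "[m..<N] = [m..<q] @ q # [Suc q..<N]"
    using assms upt_add_eq_append[of m q "N - q"] upt_conv_Cons[of q N] by simp
  with assms show "length (filter P [m..<q]) < length (filter P [m..<N])"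
    and "filter P [m..<N] ! length (filter P [m..<q]) = q"
    by (simp_all add: nth_append)
qed

lemma contains_map_filter_upt:
  assumes mono: "\<forall>a b. a < b \<longrightarrow> b < length p \<longrightarrow> q a < q b"
    and range: "\<forall>a < length p. m \<le> q a \<and> q a < N \<and> P (q a)"
    and order: "\<forall>a < length p. \<forall>b < length p. g (q a) < g (q b) \<longleftrightarrow> p ! a < p ! b"
  shows "contains (map g (filter P [m..<N])) p"
  unfolding contains_def
proof (intro exI[of _ "\<lambda>a. length (filter P [m..<q a])"] conjI allI impI)
  fix a b assume "a < b" "b < length p"
  then show "length (filter P [m..<q a]) < length (filter P [m..<q b])"
    using range mono by (intro filter_upt_rank(1)) auto
next
  fix a assume "a < length p"
  then show "length (filter P [m..<q a]) < length (map g (filter P [m..<N]))"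
    using range filter_upt_rank(1)[of m "q a" N P] by simp
next
  have nth: "map g (filter P [m..<N]) ! length (filter P [m..<q a]) = g (q a)" if "a < length p" for a
    using that range filter_upt_rank[of m "q a" N P] by simp
  fix a b assume "a < length p" "b < length p"
  with order show "map g (filter P [m..<N]) ! length (filter P [m..<q a])
      < map g (filter P [m..<N]) ! length (filter P [m..<q b]) \<longleftrightarrow> p ! a < p ! b"
    by (simp only: nth)
qed

definition grid_cell :: "nat list \<Rightarrow> (nat \<Rightarrow> nat) \<Rightarrow> (nat \<Rightarrow> nat) \<Rightarrow> nat \<Rightarrow> nat \<Rightarrow> nat list" where
  "grid_cell tau c r i j = map (\<lambda>x. tau ! (x - 1))
     (filter (\<lambda>x. c i \<le> x \<and> x < c (i + 1) \<and> r j \<le> tau ! (x - 1) \<and> tau ! (x - 1) < r (j + 1))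
       [1..<length tau + 1])"

lemma GridE:
  assumes "tau \<in> Grid k l M"
  obtains c r where "c 1 = 1" "c (k + 1) = length tau + 1" "r 1 = 1" "r (l + 1) = length tau + 1"
    and "set tau = {1..length tau}"
    and "\<forall>i\<in>{1..k}. \<forall>j\<in>{1..l}. grid_cell tau c r i j \<in> M i j"
  using assms unfolding Grid_def is_perm_def grid_cell_def by blast

(* x is a 0-based index into tau, whereas Grid numbers positions from 1. *)
definition in_cell :: "nat list \<Rightarrow> (nat \<Rightarrow> nat) \<Rightarrow> (nat \<Rightarrow> nat) \<Rightarrow> nat \<Rightarrow> nat \<Rightarrow> nat \<Rightarrow> bool" where
  "in_cell tau c r i j x \<longleftrightarrow> c i \<le> Suc x \<and> Suc x < c (i + 1) \<and> r j \<le> tau ! x \<and> tau ! x < r (j + 1)"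

lemma contains_grid_cell:
  assumes "occurrence q tau p" and "\<forall>a < length p. in_cell tau c r i j (q a)"
  shows "contains (grid_cell tau c r i j) p"
  unfolding grid_cell_def
  by (rule contains_map_filter_upt[where q = "\<lambda>a. Suc (q a)"])
    (use assms in \<open>auto simp: occurrence_def in_cell_def\<close>)

(* Taking the greatest admissible i makes block monotone in x without using that the
   separators c are sorted. *)
definition block :: "(nat \<Rightarrow> nat) \<Rightarrow> nat \<Rightarrow> nat \<Rightarrow> nat" where
  "block c k x = (GREATEST i. i \<in> {1..k} \<and> c i \<le> x)"

lemma block_bounds:
  assumes "c 1 \<le> x" "x < c (k + 1)"
  shows "block c k x \<in> {1..k}" "c (block c k x) \<le> x" "x < c (block c k x + 1)"
proof -
  let ?P = "\<lambda>i. i \<in> {1..k} \<and> c i \<le> x"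
  have "k \<noteq> 0" using assms by (cases k) auto
  have P: "?P (block c k x)"
    unfolding block_def by (rule GreatestI_nat[of _ 1 k]) (use assms \<open>k \<noteq> 0\<close> in auto)
  then show "block c k x \<in> {1..k}" "c (block c k x) \<le> x" by auto
  have "\<not> ?P (block c k x + 1)"
  proof
    assume succ: "?P (block c k x + 1)"
    have "block c k x + 1 \<le> block c k x"
      unfolding block_def[of c k x] by (rule Greatest_le_nat[of _ _ k]) (use succ in \<open>auto simp: block_def\<close>)
    then show False by simp
  qed
  with P assms show "x < c (block c k x + 1)"
    by (cases "block c k x = k") auto
qed

lemma block_mono:
  assumes "c 1 \<le> x" "x \<le> y" "1 \<le> k"
  shows "block c k x \<le> block c k y"
proof -
  have x: "block c k x \<in> {1..k} \<and> c (block c k x) \<le> x"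
    unfolding block_def by (rule GreatestI_nat[of _ 1 k]) (use assms in auto)
  show ?thesis
    unfolding block_def[of c k y] by (rule Greatest_le_nat[of _ _ k]) (use x assms(2) in auto)
qed

definition monotone_labelling :: "nat list \<Rightarrow> nat list \<Rightarrow> nat list \<Rightarrow> bool" where
  "monotone_labelling s col row \<longleftrightarrow>
     (\<forall>a\<in>set [0..<length s]. \<forall>b\<in>set [0..<length s].
        (a < b \<longrightarrow> col ! a \<le> col ! b) \<and> (s ! a < s ! b \<longrightarrow> row ! a \<le> row ! b))"

lemma block_labelling_of_occurrence:
  assumes f: "occurrence f tau s"
    and c: "c 1 = 1" "c (k + 1) = length tau + 1"
    and r: "r 1 = 1" "r (l + 1) = length tau + 1"
    and tau_values: "set tau = {1..length tau}"
  defines "col \<equiv> map (\<lambda>a. block c k (Suc (f a))) [0..<length s]"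
    and "row \<equiv> map (\<lambda>a. block r l (tau ! f a)) [0..<length s]"
  shows "col \<in> set (List.n_lists (length s) [1..<k + 1])"
    and "row \<in> set (List.n_lists (length s) [1..<l + 1])"
    and "monotone_labelling s col row"
    and "\<forall>a < length s. in_cell tau c r (col ! a) (row ! a) (f a)"
proof -
  have f_range: "f a < length tau" if "a < length s" for a
    using f that by (simp add: occurrence_def)
  have tau_range: "tau ! f a \<in> {1..length tau}" if "a < length s" for a
    using f_range[OF that] tau_values nth_mem by blast
  have col_bounds: "col ! a \<in> {1..k} \<and> c (col ! a) \<le> Suc (f a) \<and> Suc (f a) < c (col ! a + 1)"
    if "a < length s" for a
    using that f_range[OF that] c block_bounds[of c "Suc (f a)" k] by (simp add: col_def)
  have row_bounds: "row ! a \<in> {1..l} \<and> r (row ! a) \<le> tau ! f a \<and> tau ! f a < r (row ! a + 1)"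
    if "a < length s" for a
    using that tau_range[OF that] r block_bounds[of r "tau ! f a" l] by (simp add: row_def)
  have "length col = length s" "length row = length s"
    by (simp_all add: col_def row_def)
  then show "col \<in> set (List.n_lists (length s) [1..<k + 1])"
    and "row \<in> set (List.n_lists (length s) [1..<l + 1])"
    using col_bounds row_bounds by (fastforce simp: set_n_lists in_set_conv_nth)+
  show "\<forall>a < length s. in_cell tau c r (col ! a) (row ! a) (f a)"
    using col_bounds row_bounds by (simp add: in_cell_def)
  show "monotone_labelling s col row"
    unfolding monotone_labelling_def
  proof (intro ballI conjI impI)
    fix a b assume ab: "a \<in> set [0..<length s]" "b \<in> set [0..<length s]"
    then have "1 \<le> k" "1 \<le> l" using col_bounds row_bounds by fastforce+
    show "col ! a \<le> col ! b" if "a < b"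
    proof -
      have "f a < f b" using ab that f by (simp add: occurrence_def)
      then show ?thesis
        using ab c \<open>1 \<le> k\<close> by (simp add: col_def) (rule block_mono, simp_all)
    qed
    show "row ! a \<le> row ! b" if "s ! a < s ! b"
    proof -
      have "tau ! f a < tau ! f b" using ab that f by (simp add: occurrence_def)
      then show ?thesis
        using ab r tau_range \<open>1 \<le> l\<close> by (simp add: row_def) (rule block_mono, simp_all)
    qed
  qed
qed

lemma contains_grid_cell_of_labelling:
  assumes f: "occurrence f tau s"
    and cells: "\<forall>a < length s. in_cell tau c r (col ! a) (row ! a) (f a)"
    and sorted: "sorted_wrt (<) is" and range: "set is \<subseteq> {..<length s}"
    and same_cell: "\<forall>a\<in>set is. col ! a = i \<and> row ! a = j"
    and iso: "order_isomorphic (map ((!) s) is) p"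
  shows "contains (grid_cell tau c r i j) p"
proof (rule contains_grid_cell)
  show "occurrence (\<lambda>a. f (is ! a)) tau p"
    using f sorted range iso by (rule occurrence_compose)
  show "\<forall>a < length p. in_cell tau c r i j (f (is ! a))"
  proof (intro allI impI)
    fix a assume "a < length p"
    then have "is ! a \<in> set is" using iso by (simp add: order_isomorphic_def)
    then have "is ! a < length s" "col ! (is ! a) = i" "row ! (is ! a) = j"
      using range same_cell by auto
    then show "in_cell tau c r i j (f (is ! a))"
      using cells by metis
  qed
qed

(* Here and in monotone_labelling and order_isomorphic all quantifiers range over explicit
   lists, so that ungriddable can be decided by code_simp. *)
definition ungriddable :: "nat \<Rightarrow> nat \<Rightarrow> (nat \<Rightarrow> nat \<Rightarrow> nat list) \<Rightarrow> nat list \<Rightarrow> bool" where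
  "ungriddable k l B s \<longleftrightarrow>
     (\<forall>col\<in>set (List.n_lists (length s) [1..<k + 1]). \<forall>row\<in>set (List.n_lists (length s) [1..<l + 1]).
        monotone_labelling s col row \<longrightarrow>
        (\<exists>i\<in>set [1..<k + 1]. \<exists>j\<in>set [1..<l + 1]. \<exists>is\<in>set (List.n_lists (length (B i j)) [0..<length s]).
           sorted_wrt (<) is \<and> (\<forall>a\<in>set is. col ! a = i \<and> row ! a = j) \<and>
           order_isomorphic (map ((!) s) is) (B i j)))"

lemma Grid_subset_Av_if_ungriddable:
  assumes "ungriddable k l B s"
  shows "Grid k l (\<lambda>i j. Av (B i j)) \<subseteq> Av s"
proof
  fix tau assume "tau \<in> Grid k l (\<lambda>i j. Av (B i j))"
  then obtain c r where c: "c 1 = 1" "c (k + 1) = length tau + 1"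
    and r: "r 1 = 1" "r (l + 1) = length tau + 1" and tau_values: "set tau = {1..length tau}"
    and cells: "\<forall>i\<in>{1..k}. \<forall>j\<in>{1..l}. grid_cell tau c r i j \<in> Av (B i j)"
    by (rule GridE)
  show "tau \<in> Av s"
  proof (rule ccontr)
    assume "tau \<notin> Av s"
    then obtain f where f: "occurrence f tau s"
      unfolding Av_def contains_iff_occurrence by blast
    obtain col row where labels: "col \<in> set (List.n_lists (length s) [1..<k + 1])"
        "row \<in> set (List.n_lists (length s) [1..<l + 1])" "monotone_labelling s col row"
      and in_cells: "\<forall>a < length s. in_cell tau c r (col ! a) (row ! a) (f a)"
      using block_labelling_of_occurrence[OF f c r tau_values] by blast
    then obtain i j "is" where ij: "i \<in> set [1..<k + 1]" "j \<in> set [1..<l + 1]"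
      and is_lists: "is \<in> set (List.n_lists (length (B i j)) [0..<length s])"
      and "sorted_wrt (<) is" "\<forall>a\<in>set is. col ! a = i \<and> row ! a = j"
        "order_isomorphic (map ((!) s) is) (B i j)"
      using assms unfolding ungriddable_def by blast
    moreover have "set is \<subseteq> {..<length s}"
      using is_lists by (auto simp: set_n_lists)
    ultimately have "contains (grid_cell tau c r i j) (B i j)"
      using contains_grid_cell_of_labelling[OF f in_cells] by blast
    moreover have "i \<in> {1..k}" "j \<in> {1..l}" using ij by auto
    ultimately show False using cells by (simp add: Av_def)
  qed
qed

definition cell_bases :: "nat list \<Rightarrow> nat \<Rightarrow> nat \<Rightarrow> nat list" where
  "cell_bases p i j = (if i = 1 \<and> j = 1 then p else if i = 2 \<and> j = 1 then [1, 2]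
                       else if i = 1 \<and> j = 2 then [1, 2] else [2, 1])"

lemma ungriddable_14523: "ungriddable 2 2 (cell_bases [1, 3, 2]) [1, 4, 5, 2, 3]"
  by code_simp

lemma ungriddable_24513: "ungriddable 2 2 (cell_bases [2, 3, 1]) [2, 4, 5, 1, 3]"
  by code_simp

lemma ungriddable_32154: "ungriddable 2 2 (cell_bases [3, 2, 1]) [3, 2, 1, 5, 4]"
  by code_simp

lemma ungriddable_42513: "ungriddable 2 2 (cell_bases [3, 2, 1]) [4, 2, 5, 1, 3]"
  by code_simp

theorem proposition13:
  fixes \<pi> \<sigma> :: "nat list"
  assumes "(\<pi> = [1,3,2] \<and> \<sigma> = [1,4,5,2,3]) \<or> (\<pi> = [2,3,1] \<and> \<sigma> = [2,4,5,1,3])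
    \<or> (\<pi> = [3,2,1] \<and> \<sigma> \<in> {[3,2,1,5,4], [4,2,5,1,3]})"
  shows "Grid 2 2 (\<lambda>i j. if i = 1 \<and> j = 1 then Av \<pi> else if i = 2 \<and> j = 1 then Dec
                         else if i = 1 \<and> j = 2 then Dec else Inc) \<subseteq> Av \<sigma>"
proof -
  have "(\<lambda>i j. if i = 1 \<and> j = 1 then Av \<pi> else if i = 2 \<and> j = 1 then Dec
                else if i = 1 \<and> j = 2 then Dec else Inc) = (\<lambda>i j. Av (cell_bases \<pi> i j))"
    by (auto simp: fun_eq_iff cell_bases_def Dec_def Inc_def)
  moreover have "ungriddable 2 2 (cell_bases \<pi>) \<sigma>"
    using assms ungriddable_14523 ungriddable_24513 ungriddable_32154 ungriddable_42513 by auto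
  ultimately show ?thesis
    using Grid_subset_Av_if_ungriddable by metis
qed

end
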